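(* Let $n\geqslant2$, $i_0,j_0\in\{0,\dots,n\}$, $x_{i_0},y_{j_0}\in\mathbf{Z}$, $\boldsymbol{c}\in\mathbf{Z}^{n+1}$ and $q\geqslant1$. For $(a_i)_{i\neq i_0},(a'_j)_{j\neq j_0}\in(\mathbf{Z}/q\mathbf{Z})^n$ let $\boldsymbol{a}\in(\mathbf{Z}/q\mathbf{Z})^{n+1}$ have coordinates $a_i$ ($i\neq i_0$) and $x_{i_0}\bmod q$ at $i_0$, and $\boldsymbol{a}'$ have coordinates $a'_j$ ($j\neq j_0$) and $y_{j_0}\bmod q$ at $j_0$. Then for every $\eta>0$, \[\sum_{\substack{(a_i)_{i\neq i_0}\in(\mathbf{Z}/q\mathbf{Z})^n\\(a'_j)_{j\neq j_0}\in(\mathbf{Z}/q\mathbf{Z})^n}}|S_q(\boldsymbol{a},\boldsymbol{a}')(\boldsymbol{c})|\ll q^{3+2n+\eta},\] the implied constant depending only on $n$ and $\eta$.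
   Context: $e_q(x)=\exp(2i\pi x/q)$ and $S_q(\boldsymbol{a},\boldsymbol{a}')(\boldsymbol{c})=\sum_{d\in(\mathbf{Z}/q\mathbf{Z})^*}\sum_{\boldsymbol{b}\in(\mathbf{Z}/q\mathbf{Z})^{n+1}}e_q\big(d\sum_ka_ka'_kb_k+\boldsymbol{c}.\boldsymbol{b}\big)$. *)

theory Defs
  imports Complex_Main "HOL-Library.FuncSet"
begin

text \<open>Residues mod q are represented by integers in {0..<q}.
  Vectors in (Z/qZ)^(n+1) are functions nat => int on {0..n}.\<close>

definition e_q :: "nat \<Rightarrow> int \<Rightarrow> complex" where
  "e_q q x = exp (2 * pi * \<i> * of_int x / of_nat q)"

definition units_mod :: "nat \<Rightarrow> int set" where
  "units_mod q = {d \<in> {0..<int q}. coprime d (int q)}"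

definition S_q :: "nat \<Rightarrow> nat \<Rightarrow> (nat \<Rightarrow> int) \<Rightarrow> (nat \<Rightarrow> int) \<Rightarrow> (nat \<Rightarrow> int) \<Rightarrow> complex" where
  "S_q q n a a' c =
     (\<Sum>d\<in>units_mod q. \<Sum>b\<in>PiE {..n} (\<lambda>_. {0..<int q}).
        e_q q (d * (\<Sum>k\<le>n. a k * a' k * b k) + (\<Sum>k\<le>n. c k * b k)))"

end

theory Submission
  imports Defs "HOL-Analysis.Complex_Transcendental"
begin

text \<open>Each exponential sum over one coordinate of \<open>b\<close> is a complete geometric sum, so
  \<open>|S_q(a,a')(c)| \<le> q^(n+1) \<cdot> #{d : q | d a_k a'_k + c_k for all k}\<close>. Extending the sum over
  \<open>a, a'\<close> to all of \<open>(Z/qZ)^(n+1)\<close> makes it factor over \<open>k\<close>; for a unit \<open>d\<close> each factor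
  counts the solutions of \<open>d s t + c_k \<equiv> 0\<close>, at most \<open>\<Sum>\<^sub>t gcd(t,q) \<le> q \<tau>(q)\<close>. The divisor
  bound \<open>\<tau>(q) \<ll> q^\<epsilon>\<close> gives \<open>q^(n+2) (q \<tau>(q))^(n+1) \<ll> q^(2n+3+\<eta>)\<close>.\<close>

lemma dvd_mult_imp_div_gcd_dvd:
  fixes a b d :: nat
  assumes "d dvd a * b" and "a > 0"
  shows "d div gcd d a dvd b"
proof -
  let ?g = "gcd d a"
  have "?g > 0" using assms by simp
  have "?g * (d div ?g) dvd ?g * ((a div ?g) * b)"
    using assms(1) by (metis dvd_mult_div_cancel gcd_dvd1 gcd_dvd2 mult.assoc)
  then have "d div ?g dvd (a div ?g) * b"
    using \<open>?g > 0\<close> nat_mult_dvd_cancel1 by blast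
  moreover have "coprime (d div ?g) (a div ?g)"
    using \<open>?g > 0\<close> by (simp add: div_gcd_coprime)
  ultimately show ?thesis by (simp add: coprime_dvd_mult_right_iff)
qed

lemma card_divisors_mult_le:
  fixes a b :: nat
  assumes "a > 0" "b > 0"
  shows "card {d. d dvd a * b} \<le> card {d. d dvd a} * card {d. d dvd b}"
proof -
  have "card {d. d dvd a * b} \<le> card ({d. d dvd a} \<times> {d. d dvd b})"
  proof (rule card_inj_on_le[where f = "\<lambda>d. (gcd d a, d div gcd d a)"])
    show "inj_on (\<lambda>d. (gcd d a, d div gcd d a)) {d. d dvd a * b}"
      by (intro inj_onI) (metis dvd_mult_div_cancel gcd_dvd1 prod.inject)
    show "(\<lambda>d. (gcd d a, d div gcd d a)) ` {d. d dvd a * b} \<subseteq> {d. d dvd a} \<times> {d. d dvd b}"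
      using dvd_mult_imp_div_gcd_dvd assms by auto
    show "finite ({d. d dvd a} \<times> {d. d dvd b})"
      using assms by (simp add: finite_divisors_nat)
  qed
  then show ?thesis by (simp add: card_cartesian_product)
qed

lemma card_divisors_prime_power_le:
  fixes p :: nat
  assumes "prime p"
  shows "card {d. d dvd p ^ k} \<le> k + 1"
proof -
  have "{d. d dvd p ^ k} = (\<lambda>i. p ^ i) ` {..k}"
    using divides_primepow_nat[OF assms] by auto
  then have "card {d. d dvd p ^ k} \<le> card {..k}"
    by (metis card_image_le finite_atMost)
  then show ?thesis by simp
qed

lemma Suc_le_mult_two_powr:
  fixes \<epsilon> :: real
  assumes "\<epsilon> > 0"
  defines "M \<equiv> max 1 (1 / (\<epsilon> * ln 2))"
  shows "real (k + 1) \<le> M * 2 powr (real k * \<epsilon>)"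
proof -
  have "1 + real k * \<epsilon> * ln 2 \<le> exp (real k * \<epsilon> * ln 2)"
    by (rule exp_ge_add_one_self)
  also have "\<dots> = 2 powr (real k * \<epsilon>)" by (simp add: powr_def)
  finally have exp_bound: "1 + real k * \<epsilon> * ln 2 \<le> 2 powr (real k * \<epsilon>)" .
  have "M \<ge> 1" by (simp add: M_def)
  have "1 / (\<epsilon> * ln 2) * (\<epsilon> * ln 2) \<le> M * (\<epsilon> * ln 2)"
    using assms by (intro mult_right_mono) (auto simp: M_def)
  then have "1 \<le> M * (\<epsilon> * ln 2)" using assms by simp
  then have "real k * 1 \<le> real k * (M * (\<epsilon> * ln 2))"
    by (intro mult_left_mono) auto
  then have "real (k + 1) \<le> M + real k * (M * (\<epsilon> * ln 2))"
    using \<open>M \<ge> 1\<close> by simp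
  also have "\<dots> = M * (1 + real k * \<epsilon> * ln 2)" by (simp add: algebra_simps)
  also have "\<dots> \<le> M * 2 powr (real k * \<epsilon>)"
    using exp_bound \<open>M \<ge> 1\<close> by (intro mult_left_mono) auto
  finally show ?thesis .
qed

lemma prime_power_factor_split:
  fixes p q :: nat
  assumes "prime p" "p dvd q" "q > 0"
  obtains k m where "q = p ^ k * m" "k \<ge> 1" "\<not> p dvd m" "m > 0"
proof
  define k where "k = multiplicity p q"
  show "q = p ^ k * (q div p ^ k)" unfolding k_def using multiplicity_dvd[of p q] by simp
  show "k \<ge> 1" unfolding k_def using assms
    by (simp add: prime_multiplicity_gt_zero_iff Suc_le_eq)
  show "\<not> p dvd q div p ^ k" unfolding k_def
    by (rule multiplicity_decompose) (use assms in \<open>auto simp: prime_elem_def\<close>)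
  show "q div p ^ k > 0"
    using assms(3) \<open>q = p ^ k * (q div p ^ k)\<close> by (metis gr0I mult_0_right)
qed

lemma card_divisors_prime_power_mult_le:
  fixes p m :: nat
  assumes "prime p" "m > 0"
  shows "card {d. d dvd p ^ k * m} \<le> (k + 1) * card {d. d dvd m}"
proof -
  have "card {d. d dvd p ^ k * m} \<le> card {d. d dvd p ^ k} * card {d. d dvd m}"
    using assms by (intro card_divisors_mult_le) (auto simp: prime_gt_0_nat)
  also have "\<dots> \<le> (k + 1) * card {d. d dvd m}"
    using card_divisors_prime_power_le[OF assms(1)] by (intro mult_right_mono) auto
  finally show ?thesis .
qed

text \<open>A prime with \<open>p^\<epsilon> \<ge> 2\<close> needs no constant, since \<open>k + 1 \<le> 2^k\<close>.\<close>

lemma Suc_le_prime_factor_mult_powr: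
  fixes \<epsilon> M :: real and p :: nat
  assumes "\<epsilon> > 0" "M \<ge> 1" "\<And>k. real (k + 1) \<le> M * 2 powr (real k * \<epsilon>)" "p \<ge> 2"
  shows "real (k + 1) \<le> (if real p powr \<epsilon> < 2 then M else 1) * real p powr (real k * \<epsilon>)"
proof (cases "real p powr \<epsilon> < 2")
  case True
  have "2 powr (real k * \<epsilon>) \<le> real p powr (real k * \<epsilon>)"
    using assms(1,4) by (intro powr_mono2) auto
  then have "M * 2 powr (real k * \<epsilon>) \<le> M * real p powr (real k * \<epsilon>)"
    using assms(2) by (intro mult_left_mono) auto
  with assms(3)[of k] True show ?thesis by simp
next
  case False
  have "real (k + 1) \<le> 2 ^ k" by (induction k) auto
  also have "\<dots> \<le> (real p powr \<epsilon>) ^ k" using False by (intro power_mono) auto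
  also have "\<dots> = real p powr (real k * \<epsilon>)"
    using assms(4) by (simp add: powr_realpow[symmetric] powr_powr mult.commute)
  finally show ?thesis using False by simp
qed

lemma card_divisors_le_powr_small_primes:
  fixes \<epsilon> M :: real
  assumes "\<epsilon> > 0" and "M \<ge> 1" and M: "\<And>k. real (k + 1) \<le> M * 2 powr (real k * \<epsilon>)"
    and "q > 0"
  shows "real (card {d. d dvd q}) \<le>
           M ^ card {p. prime p \<and> p dvd q \<and> real p powr \<epsilon> < 2} * real q powr \<epsilon>"
  using \<open>q > 0\<close>
proof (induction q rule: less_induct)
  case (less q)
  define S where "S x = {p. prime p \<and> p dvd x \<and> real p powr \<epsilon> < 2}" for x :: nat
  show ?case
  proof (cases "q = 1")
    case True
    then have no_primes: "{p. prime p \<and> p dvd q \<and> real p powr \<epsilon> < 2} = {}" by auto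
    show ?thesis unfolding no_primes using True by simp
  next
    case False
    then obtain p where p: "prime p" "p dvd q" using prime_factor_nat by blast
    obtain k m where q_eq: "q = p ^ k * m" and "k \<ge> 1" "\<not> p dvd m" "m > 0"
      using prime_power_factor_split[OF p less.prems] .
    define F where "F = (if real p powr \<epsilon> < 2 then M else 1)"
    have "p \<ge> 2" using p prime_ge_2_nat by blast
    then have "p ^ k \<ge> p" using \<open>k \<ge> 1\<close> by (metis power_increasing power_one_right le_trans one_le_numeral)
    then have "m < q" using q_eq \<open>m > 0\<close> \<open>p \<ge> 2\<close> by simp
    have "finite (S q)" unfolding S_def using less.prems
      by (rule finite_subset[rotated, OF finite_divisors_nat[of q]]) auto
    have "S m \<subseteq> S q" unfolding S_def using q_eq by auto
    have "F * M ^ card (S m) \<le> M ^ card (S q)"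
    proof (cases "real p powr \<epsilon> < 2")
      case True
      with p \<open>\<not> p dvd m\<close> \<open>S m \<subseteq> S q\<close> have "insert p (S m) \<subseteq> S q" "p \<notin> S m"
        by (auto simp: S_def)
      moreover have "finite (S m)" using \<open>S m \<subseteq> S q\<close> \<open>finite (S q)\<close> by (rule finite_subset)
      ultimately have "card (S m) + 1 \<le> card (S q)"
        using \<open>finite (S q)\<close> card_mono[of "S q" "insert p (S m)"] by simp
      then show ?thesis
        using True \<open>M \<ge> 1\<close> by (simp add: F_def power_increasing flip: power_Suc)
    next
      case False
      then show ?thesis using \<open>S m \<subseteq> S q\<close> \<open>finite (S q)\<close> \<open>M \<ge> 1\<close>
        by (simp add: F_def power_increasing card_mono)
    qed
    have "real (card {d. d dvd q}) \<le> real (k + 1) * real (card {d. d dvd m})"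
      using card_divisors_prime_power_mult_le[OF p(1) \<open>m > 0\<close>, of k] q_eq
      by (metis of_nat_le_iff of_nat_mult)
    also have "\<dots> \<le> (F * real p powr (real k * \<epsilon>)) * (M ^ card (S m) * real m powr \<epsilon>)"
      using Suc_le_prime_factor_mult_powr[OF assms(1-3) \<open>p \<ge> 2\<close>, of k]
        less.IH[OF \<open>m < q\<close> \<open>m > 0\<close>] \<open>M \<ge> 1\<close>
      by (intro mult_mono) (auto simp: F_def S_def)
    also have "\<dots> = (F * M ^ card (S m)) * real q powr \<epsilon>"
      using \<open>p \<ge> 2\<close> by (simp add: q_eq powr_mult powr_realpow[symmetric] powr_powr mult_ac)
    also have "\<dots> \<le> M ^ card (S q) * real q powr \<epsilon>"
      using \<open>F * M ^ card (S m) \<le> M ^ card (S q)\<close> by (intro mult_right_mono) auto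
    finally show ?thesis unfolding S_def .
  qed
qed

lemma divisor_count_bound:
  fixes \<epsilon> :: real
  assumes "\<epsilon> > 0"
  obtains C where "\<And>q. q > 0 \<Longrightarrow> real (card {d. d dvd q}) \<le> C * real q powr \<epsilon>"
proof -
  define M where "M = max 1 (1 / (\<epsilon> * ln 2))"
  have "M \<ge> 1" by (simp add: M_def)
  have M: "\<And>k. real (k + 1) \<le> M * 2 powr (real k * \<epsilon>)"
    unfolding M_def using assms by (rule Suc_le_mult_two_powr)
  define N where "N = nat \<lceil>2 powr (1 / \<epsilon>)\<rceil>"
  have small_primes: "{p. prime p \<and> p dvd q \<and> real p powr \<epsilon> < 2} \<subseteq> {..<N}" for q
  proof clarify
    fix p :: nat
    assume "real p powr \<epsilon> < 2"
    show "p < N"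
    proof (rule ccontr)
      assume "\<not> p < N"
      then have "2 powr (1 / \<epsilon>) \<le> real p" unfolding N_def by linarith
      then have "(2 powr (1 / \<epsilon>)) powr \<epsilon> \<le> real p powr \<epsilon>"
        using assms by (intro powr_mono2) auto
      with \<open>real p powr \<epsilon> < 2\<close> assms show False by (simp add: powr_powr)
    qed
  qed
  show ?thesis
  proof (rule that)
    fix q :: nat
    assume "q > 0"
    have "real (card {d. d dvd q}) \<le>
            M ^ card {p. prime p \<and> p dvd q \<and> real p powr \<epsilon> < 2} * real q powr \<epsilon>"
      using card_divisors_le_powr_small_primes[OF assms \<open>M \<ge> 1\<close> M \<open>q > 0\<close>] .
    also have "\<dots> \<le> M ^ N * real q powr \<epsilon>"
      using card_mono[OF finite_lessThan small_primes[of q]] \<open>M \<ge> 1\<close>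
      by (intro mult_right_mono power_increasing) auto
    finally show "real (card {d. d dvd q}) \<le> M ^ N * real q powr \<epsilon>" .
  qed
qed

text \<open>Pillai's function; summing over \<open>t < q\<close> rather than \<open>1 \<le> t \<le> q\<close> changes nothing since
  \<open>gcd 0 q = gcd q q\<close>.\<close>

definition pillai :: "nat \<Rightarrow> nat" where
  "pillai q = (\<Sum>t<q. gcd t q)"

lemma card_multiples_lessThan_le:
  fixes g q :: nat
  assumes "g dvd q"
  shows "card {t\<in>{..<q}. g dvd t} \<le> q div g"
proof -
  have "{t\<in>{..<q}. g dvd t} \<subseteq> (\<lambda>j. g * j) ` {..<q div g}"
  proof clarify
    fix t
    assume "t < q" "g dvd t"
    then obtain j where "t = g * j" by blast
    with \<open>t < q\<close> assms have "j < q div g" by auto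
    with \<open>t = g * j\<close> show "t \<in> (\<lambda>j. g * j) ` {..<q div g}" by blast
  qed
  then have "card {t\<in>{..<q}. g dvd t} \<le> card ((\<lambda>j. g * j) ` {..<q div g})"
    by (intro card_mono) auto
  also have "\<dots> \<le> q div g"
    using card_image_le[of "{..<q div g}" "\<lambda>j. g * j"] by simp
  finally show ?thesis .
qed

lemma pillai_le_mult_card_divisors:
  fixes q :: nat
  assumes "q > 0"
  shows "pillai q \<le> q * card {d. d dvd q}"
proof -
  define D where "D = {d. d dvd q}"
  have "finite D" unfolding D_def using assms by (simp add: finite_divisors_nat)
  have "pillai q \<le> (\<Sum>t<q. \<Sum>g\<in>D. if g dvd t then g else 0)"
    unfolding pillai_def
  proof (intro sum_mono)
    fix t
    have "gcd t q \<in> D" unfolding D_def by simp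
    with \<open>finite D\<close> have "(\<Sum>g\<in>D. if g dvd t then g else 0)
        = gcd t q + (\<Sum>g\<in>D - {gcd t q}. if g dvd t then g else 0)"
      by (simp add: sum.remove)
    then show "gcd t q \<le> (\<Sum>g\<in>D. if g dvd t then g else 0)" by simp
  qed
  also have "\<dots> = (\<Sum>g\<in>D. \<Sum>t<q. if g dvd t then g else 0)" by (rule sum.swap)
  also have "\<dots> \<le> (\<Sum>g\<in>D. q)"
  proof (intro sum_mono)
    fix g
    assume "g \<in> D"
    then have "g dvd q" unfolding D_def by simp
    have "(\<Sum>t<q. if g dvd t then g else 0) = g * card {t\<in>{..<q}. g dvd t}"
      by (simp add: sum.If_cases Int_def)
    also have "\<dots> \<le> g * (q div g)"
      using card_multiples_lessThan_le[OF \<open>g dvd q\<close>] by simp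
    also have "\<dots> = q" using \<open>g dvd q\<close> by simp
    finally show "(\<Sum>t<q. if g dvd t then g else 0) \<le> q" .
  qed
  also have "\<dots> = q * card D" by simp
  finally show ?thesis unfolding D_def .
qed

lemma card_linear_congruence_solutions_le:
  fixes q :: nat and m c :: int
  assumes "q > 0"
  shows "card {s\<in>{0..<int q}. int q dvd m * s + c} \<le> nat (gcd m (int q))"
proof -
  define g where "g = gcd m (int q)"
  define h where "h = int q div g"
  have "g > 0" unfolding g_def using assms by simp
  have q_eq: "int q = g * h" unfolding h_def g_def by simp
  then have "h > 0" using \<open>g > 0\<close> assms by (metis zero_less_mult_pos of_nat_0_less_iff)
  obtain m' where m_eq: "m = g * m'" unfolding g_def by (meson gcd_dvd1 dvdE)
  have "gcd m (int q) = g * gcd m' h" using m_eq q_eq \<open>g > 0\<close> by (simp add: gcd_mult_left)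
  then have "coprime m' h" using \<open>g > 0\<close> assms by (auto simp: g_def coprime_iff_gcd_eq_1)
  text \<open>Solutions are congruent modulo \<open>h = q / g\<close>, so they lie in distinct blocks \<open>[jh, (j+1)h)\<close>.\<close>
  have "card {s\<in>{0..<int q}. int q dvd m * s + c} \<le> card {0..<g}"
  proof (rule card_inj_on_le[where f = "\<lambda>s. s div h"])
    show "inj_on (\<lambda>s. s div h) {s\<in>{0..<int q}. int q dvd m * s + c}"
    proof (rule inj_onI, clarify)
      fix s1 s2
      assume sol: "int q dvd m * s1 + c" "int q dvd m * s2 + c" and "s1 div h = s2 div h"
      have "int q dvd m * (s1 - s2)"
        using dvd_diff[OF sol] by (simp add: algebra_simps)
      then have "g * h dvd g * (m' * (s1 - s2))" using q_eq m_eq by (simp add: mult.assoc)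
      then have "h dvd m' * (s1 - s2)" using \<open>g > 0\<close> by simp
      then have "h dvd s1 - s2" using \<open>coprime m' h\<close>
        by (metis coprime_commute coprime_dvd_mult_right_iff)
      then have "s1 mod h = s2 mod h" by (simp add: mod_eq_dvd_iff)
      with \<open>s1 div h = s2 div h\<close> show "s1 = s2" by (metis div_mult_mod_eq)
    qed
    show "(\<lambda>s. s div h) ` {s\<in>{0..<int q}. int q dvd m * s + c} \<subseteq> {0..<g}"
    proof clarify
      fix s
      assume s: "s \<in> {0..<int q}"
      have "s div h * h \<le> s"
        using div_mult_mod_eq[of s h] pos_mod_sign[OF \<open>h > 0\<close>, of s] by linarith
      with s q_eq have "s div h * h < g * h" by simp
      with \<open>h > 0\<close> have "s div h < g" by simp
      moreover have "0 \<le> s div h" using s \<open>h > 0\<close> by (simp add: pos_imp_zdiv_nonneg_iff)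
      ultimately show "s div h \<in> {0..<g}" by simp
    qed
  qed auto
  then show ?thesis unfolding g_def by simp
qed

lemma sum_atLeastLessThan_int_eq:
  "(\<Sum>t\<in>{0..<int q}. f t) = (\<Sum>t<q. f (int t))"
proof -
  have "{0..<int q} = int ` {..<q}"
    using image_int_atLeastLessThan[of 0 q] by (simp add: atLeast0LessThan)
  then show ?thesis by (simp add: sum.reindex)
qed

lemma sum_bilinear_congruence_le_pillai:
  fixes q :: nat and d c :: int
  assumes "q > 0" and "coprime d (int q)"
  shows "(\<Sum>s\<in>{0..<int q}. \<Sum>t\<in>{0..<int q}. of_bool (int q dvd d * s * t + c) :: real)
           \<le> real (pillai q)"
proof -
  have "(\<Sum>s\<in>{0..<int q}. \<Sum>t\<in>{0..<int q}. of_bool (int q dvd d * s * t + c) :: real)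
      \<le> (\<Sum>s\<in>{0..<int q}. real_of_int (gcd s (int q)))"
  proof (intro sum_mono)
    fix s
    have "(\<Sum>t\<in>{0..<int q}. of_bool (int q dvd d * s * t + c) :: real)
        = real (card {t\<in>{0..<int q}. int q dvd (d * s) * t + c})"
      by (simp add: sum.If_cases Int_def)
    also have "\<dots> \<le> real (nat (gcd (d * s) (int q)))"
      using card_linear_congruence_solutions_le[OF assms(1)] of_nat_le_iff by blast
    also have "gcd (d * s) (int q) = gcd s (int q)"
      using assms(2) by (metis gcd_mult_left_left_cancel coprime_commute)
    finally show "(\<Sum>t\<in>{0..<int q}. of_bool (int q dvd d * s * t + c) :: real)
        \<le> real_of_int (gcd s (int q))" by simp
  qed
  also have "\<dots> = (\<Sum>s<q. real_of_int (gcd (int s) (int q)))"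
    by (rule sum_atLeastLessThan_int_eq)
  also have "\<dots> = real (pillai q)"
    unfolding pillai_def of_nat_sum by (simp only: gcd_int_int_eq of_int_of_nat_eq)
  finally show ?thesis .
qed

lemma e_q_int_mult_eq_1:
  assumes "q > 0"
  shows "e_q q (int q * m) = 1"
proof -
  have "e_q q (int q * m) = exp ((2 * of_int m * pi) * \<i>)"
    unfolding e_q_def using assms by (simp add: field_simps)
  also have "\<dots> = 1" by (rule exp_integer_2pi) simp
  finally show ?thesis .
qed

lemma e_q_eq_1_iff:
  assumes "q > 0"
  shows "e_q q L = 1 \<longleftrightarrow> int q dvd L"
proof
  assume "e_q q L = 1"
  then obtain m :: int where "Im (2 * pi * \<i> * of_int L / of_nat q) = of_int (2 * m) * pi"
    unfolding e_q_def exp_eq_1 by blast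
  then have "of_int L = real q * of_int m" using assms by (simp add: field_simps)
  then have "L = int q * m" by (metis of_int_eq_iff of_int_mult of_int_of_nat_eq)
  then show "int q dvd L" by simp
next
  assume "int q dvd L"
  then show "e_q q L = 1" using e_q_int_mult_eq_1[OF assms] by auto
qed

lemma e_q_mult_of_nat:
  "e_q q (L * int t) = e_q q L ^ t"
proof -
  have "2 * pi * \<i> * of_int (L * int t) / of_nat q = of_nat t * (2 * pi * \<i> * of_int L / of_nat q)"
    by (simp add: field_simps)
  then show ?thesis unfolding e_q_def by (simp only: exp_of_nat_mult)
qed

lemma norm_sum_e_q_linear:
  assumes "q > 0"
  shows "norm (\<Sum>t\<in>{0..<int q}. e_q q (L * t)) = real q * of_bool (int q dvd L)"
proof -
  define w where "w = e_q q L"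
  have sum_eq: "(\<Sum>t\<in>{0..<int q}. e_q q (L * t)) = (\<Sum>t<q. w ^ t)"
    by (simp add: sum_atLeastLessThan_int_eq e_q_mult_of_nat w_def)
  show ?thesis
  proof (cases "int q dvd L")
    case True
    then have "w = 1" unfolding w_def using e_q_eq_1_iff[OF assms] by simp
    with True sum_eq show ?thesis by simp
  next
    case False
    then have "w \<noteq> 1" unfolding w_def using e_q_eq_1_iff[OF assms] by simp
    have "w ^ q = e_q q (L * int q)"
      unfolding w_def by (rule e_q_mult_of_nat[symmetric])
    also have "\<dots> = 1" using e_q_int_mult_eq_1[OF assms, of L] by (simp add: mult.commute)
    finally have "w ^ q = 1" .
    with \<open>w \<noteq> 1\<close> have "(\<Sum>t<q. w ^ t) = 0" by (simp add: sum_gp_strict)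
    with False sum_eq show ?thesis by simp
  qed
qed

lemma norm_S_q_le:
  fixes q n :: nat and a a' c :: "nat \<Rightarrow> int"
  assumes "q > 0"
  shows "norm (S_q q n a a' c)
           \<le> real q ^ (n + 1) * (\<Sum>d\<in>units_mod q. \<Prod>k\<le>n. of_bool (int q dvd d * a k * a' k + c k))"
proof -
  have factor: "(\<Sum>b\<in>PiE {..n} (\<lambda>_. {0..<int q}).
        e_q q (d * (\<Sum>k\<le>n. a k * a' k * b k) + (\<Sum>k\<le>n. c k * b k)))
      = (\<Prod>k\<le>n. \<Sum>t\<in>{0..<int q}. e_q q ((d * a k * a' k + c k) * t))" for d
  proof -
    have "d * (\<Sum>k\<le>n. a k * a' k * b k) + (\<Sum>k\<le>n. c k * b k)
        = (\<Sum>k\<le>n. (d * a k * a' k + c k) * b k)" for b :: "nat \<Rightarrow> int"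
      by (simp add: sum_distrib_left sum.distrib[symmetric] algebra_simps)
    moreover have "e_q q (\<Sum>k\<le>n. X k) = (\<Prod>k\<le>n. e_q q (X k))" for X :: "nat \<Rightarrow> int"
      unfolding e_q_def by (simp add: sum_divide_distrib sum_distrib_left exp_sum)
    ultimately show ?thesis by (simp add: prod_sum_PiE)
  qed
  have "norm (S_q q n a a' c)
      \<le> (\<Sum>d\<in>units_mod q. \<Prod>k\<le>n. norm (\<Sum>t\<in>{0..<int q}. e_q q ((d * a k * a' k + c k) * t)))"
    unfolding S_q_def factor prod_norm by (rule norm_sum)
  also have "\<dots> = (\<Sum>d\<in>units_mod q. \<Prod>k\<le>n. real q * of_bool (int q dvd d * a k * a' k + c k))"
    by (simp add: norm_sum_e_q_linear[OF assms])
  also have "\<dots> = real q ^ (n + 1) *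
      (\<Sum>d\<in>units_mod q. \<Prod>k\<le>n. of_bool (int q dvd d * a k * a' k + c k))"
    by (simp add: prod.distrib sum_distrib_left)
  finally show ?thesis .
qed

lemma sum_PiE_fun_upd_le:
  fixes f :: "('a \<Rightarrow> 'b) \<Rightarrow> 'c :: ordered_comm_monoid_add"
  assumes "finite K" "\<And>k. finite (B k)" "i \<in> K" "x \<in> B i"
    and "\<And>a. a \<in> PiE K B \<Longrightarrow> 0 \<le> f a"
  shows "(\<Sum>a\<in>PiE (K - {i}) B. f (a(i := x))) \<le> (\<Sum>a\<in>PiE K B. f a)"
proof -
  have inj: "inj_on (\<lambda>a. a(i := x)) (PiE (K - {i}) B)"
  proof (rule inj_onI)
    fix a b
    assume a: "a \<in> PiE (K - {i}) B" and b: "b \<in> PiE (K - {i}) B"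
      and eq: "a(i := x) = b(i := x)"
    show "a = b"
    proof (rule ext)
      fix j
      show "a j = b j"
      proof (cases "j = i")
        case True
        have "a i = undefined" "b i = undefined"
          using PiE_arb[OF a] PiE_arb[OF b] by simp_all
        with True show ?thesis by simp
      next
        case False
        with fun_cong[OF eq, of j] show ?thesis by simp
      qed
    qed
  qed
  have "(\<Sum>a\<in>PiE (K - {i}) B. f (a(i := x))) = (\<Sum>a\<in>(\<lambda>a. a(i := x)) ` PiE (K - {i}) B. f a)"
    using sum.reindex[OF inj, of f] by (simp only: comp_def)
  also have "\<dots> \<le> (\<Sum>a\<in>PiE K B. f a)"
  proof (rule sum_mono2)
    show "finite (PiE K B)" using assms(1,2) by (simp add: finite_PiE)
    have "insert i (K - {i}) = K" using assms(3) by blast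
    then show "(\<lambda>a. a(i := x)) ` PiE (K - {i}) B \<subseteq> PiE K B"
      using PiE_fun_upd[of x B i _ "K - {i}", OF assms(4)] by auto
    show "0 \<le> f a" if "a \<in> PiE K B - (\<lambda>a. a(i := x)) ` PiE (K - {i}) B" for a
      using assms(5) that by blast
  qed
  finally show ?thesis .
qed

lemma sum_PiE_sum_PiE_prod:
  fixes f :: "'a \<Rightarrow> 'b \<Rightarrow> 'b \<Rightarrow> 'c :: comm_semiring_1"
  assumes "finite K" "finite A"
  shows "(\<Sum>a\<in>PiE K (\<lambda>_. A). \<Sum>a'\<in>PiE K (\<lambda>_. A). \<Prod>k\<in>K. f k (a k) (a' k))
           = (\<Prod>k\<in>K. \<Sum>s\<in>A. \<Sum>t\<in>A. f k s t)"
proof -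
  have "(\<Prod>k\<in>K. \<Sum>s\<in>A. \<Sum>t\<in>A. f k s t) = (\<Sum>a\<in>PiE K (\<lambda>_. A). \<Prod>k\<in>K. \<Sum>t\<in>A. f k (a k) t)"
    using assms by (rule prod_sum_PiE)
  also have "\<dots> = (\<Sum>a\<in>PiE K (\<lambda>_. A). \<Sum>a'\<in>PiE K (\<lambda>_. A). \<Prod>k\<in>K. f k (a k) (a' k))"
    using assms by (intro sum.cong refl prod_sum_PiE)
  finally show ?thesis by (rule sym)
qed

lemma sum_units_congruence_systems_le:
  fixes q n :: nat and c :: "nat \<Rightarrow> int"
  assumes "q > 0"
  shows "(\<Sum>d\<in>units_mod q. \<Sum>a\<in>PiE {..n} (\<lambda>_. {0..<int q}). \<Sum>a'\<in>PiE {..n} (\<lambda>_. {0..<int q}).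
            \<Prod>k\<le>n. of_bool (int q dvd d * a k * a' k + c k) :: real)
         \<le> real q * real (pillai q) ^ (n + 1)"
proof -
  define R where "R = {0..<int q}"
  have "(\<Sum>d\<in>units_mod q. \<Sum>a\<in>PiE {..n} (\<lambda>_. R). \<Sum>a'\<in>PiE {..n} (\<lambda>_. R).
            \<Prod>k\<le>n. of_bool (int q dvd d * a k * a' k + c k) :: real)
      = (\<Sum>d\<in>units_mod q. \<Prod>k\<le>n. \<Sum>s\<in>R. \<Sum>t\<in>R. of_bool (int q dvd d * s * t + c k))"
    by (intro sum.cong refl sum_PiE_sum_PiE_prod) (auto simp: R_def)
  also have "\<dots> \<le> (\<Sum>d\<in>units_mod q. \<Prod>k\<le>n. real (pillai q))"
  proof (intro sum_mono prod_mono conjI)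
    fix d k
    assume "d \<in> units_mod q"
    then have "coprime d (int q)" by (simp add: units_mod_def)
    then show "(\<Sum>s\<in>R. \<Sum>t\<in>R. of_bool (int q dvd d * s * t + c k)) \<le> real (pillai q)"
      unfolding R_def by (rule sum_bilinear_congruence_le_pillai[OF assms])
  qed (auto intro!: sum_nonneg)
  also have "\<dots> = real (card (units_mod q)) * real (pillai q) ^ (n + 1)" by simp
  also have "\<dots> \<le> real q * real (pillai q) ^ (n + 1)"
  proof (intro mult_right_mono)
    have "card (units_mod q) \<le> card {0..<int q}" unfolding units_mod_def by (intro card_mono) auto
    then show "real (card (units_mod q)) \<le> real q" by simp
  qed simp
  finally show ?thesis unfolding R_def .
qed

text \<open>Fixing the coordinates \<open>i\<^sub>0, j\<^sub>0\<close> only shrinks a sum of nonnegative terms, so the complete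
  sum over \<open>(Z/qZ)^(n+1) \<times> (Z/qZ)^(n+1)\<close> dominates.\<close>

lemma sum_norm_S_q_le:
  fixes q n i0 j0 :: nat and X Y :: int and c :: "nat \<Rightarrow> int"
  assumes "q > 0" "i0 \<le> n" "j0 \<le> n" "X \<in> {0..<int q}" "Y \<in> {0..<int q}"
  shows "(\<Sum>a\<in>PiE ({..n} - {i0}) (\<lambda>_. {0..<int q}). \<Sum>a'\<in>PiE ({..n} - {j0}) (\<lambda>_. {0..<int q}).
            norm (S_q q n (a(i0 := X)) (a'(j0 := Y)) c))
         \<le> real q ^ (n + 2) * real (pillai q) ^ (n + 1)"
proof -
  define R where "R = {0..<int q}"
  define V where "V = PiE {..n} (\<lambda>_. R)"
  define U where "U = units_mod q"
  define I where "I d a a' = (\<Prod>k\<le>n. of_bool (int q dvd d * a k * a' k + c k) :: real)" for d a a'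
  have swap: "(\<Sum>a\<in>V. \<Sum>a'\<in>V. \<Sum>d\<in>U. I d a a') = (\<Sum>d\<in>U. \<Sum>a\<in>V. \<Sum>a'\<in>V. I d a a')"
    by (subst sum.swap) (intro sum.cong refl sum.swap)
  have "(\<Sum>a\<in>PiE ({..n} - {i0}) (\<lambda>_. R). \<Sum>a'\<in>PiE ({..n} - {j0}) (\<lambda>_. R).
            norm (S_q q n (a(i0 := X)) (a'(j0 := Y)) c))
      \<le> (\<Sum>a\<in>PiE ({..n} - {i0}) (\<lambda>_. R). \<Sum>a'\<in>V. norm (S_q q n (a(i0 := X)) a' c))"
    unfolding V_def using assms by (intro sum_mono sum_PiE_fun_upd_le) (auto simp: R_def)
  also have "\<dots> \<le> (\<Sum>a\<in>V. \<Sum>a'\<in>V. norm (S_q q n a a' c))"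
    unfolding V_def using assms by (intro sum_PiE_fun_upd_le sum_nonneg) (auto simp: R_def)
  also have "\<dots> \<le> (\<Sum>a\<in>V. \<Sum>a'\<in>V. real q ^ (n + 1) * (\<Sum>d\<in>U. I d a a'))"
    unfolding I_def U_def using assms(1) by (intro sum_mono norm_S_q_le)
  also have "\<dots> = real q ^ (n + 1) * (\<Sum>d\<in>U. \<Sum>a\<in>V. \<Sum>a'\<in>V. I d a a')"
    by (simp add: sum_distrib_left[symmetric] swap)
  also have "\<dots> \<le> real q ^ (n + 1) * (real q * real (pillai q) ^ (n + 1))"
    using sum_units_congruence_systems_le[OF assms(1), where n = n and c = c]
    unfolding U_def V_def I_def R_def by (intro mult_left_mono) auto
  also have "\<dots> = real q ^ (n + 2) * real (pillai q) ^ (n + 1)" by simp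
  finally show ?thesis unfolding R_def .
qed

lemma pillai_le_powr:
  assumes "q > 0" and "\<And>q. q > 0 \<Longrightarrow> real (card {d. d dvd q}) \<le> C * real q powr \<epsilon>"
  shows "real (pillai q) \<le> C * real q powr (1 + \<epsilon>)"
proof -
  have "real (pillai q) \<le> real q * real (card {d. d dvd q})"
    using pillai_le_mult_card_divisors[OF assms(1)] by (metis of_nat_le_iff of_nat_mult)
  also have "\<dots> \<le> real q * (C * real q powr \<epsilon>)"
    using assms by (intro mult_left_mono) auto
  also have "\<dots> = C * real q powr (1 + \<epsilon>)"
    using assms(1) by (simp add: powr_add)
  finally show ?thesis .
qed

lemma sum_norm_S_q_le_powr:
  fixes q n i0 j0 :: nat and X Y :: int and c :: "nat \<Rightarrow> int"
  assumes divisors: "\<And>q. q > 0 \<Longrightarrow> real (card {d. d dvd q}) \<le> C * real q powr \<epsilon>"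
    and "q > 0" "i0 \<le> n" "j0 \<le> n" "X \<in> {0..<int q}" "Y \<in> {0..<int q}"
  shows "(\<Sum>a\<in>PiE ({..n} - {i0}) (\<lambda>_. {0..<int q}). \<Sum>a'\<in>PiE ({..n} - {j0}) (\<lambda>_. {0..<int q}).
            norm (S_q q n (a(i0 := X)) (a'(j0 := Y)) c))
         \<le> C ^ (n + 1) * real q powr (3 + 2 * real n + real (n + 1) * \<epsilon>)"
proof -
  have "(\<Sum>a\<in>PiE ({..n} - {i0}) (\<lambda>_. {0..<int q}). \<Sum>a'\<in>PiE ({..n} - {j0}) (\<lambda>_. {0..<int q}).
            norm (S_q q n (a(i0 := X)) (a'(j0 := Y)) c))
        \<le> real q ^ (n + 2) * real (pillai q) ^ (n + 1)"
    using assms(2-) by (rule sum_norm_S_q_le)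
  also have "\<dots> \<le> real q ^ (n + 2) * (C * real q powr (1 + \<epsilon>)) ^ (n + 1)"
    using pillai_le_powr[OF \<open>q > 0\<close> divisors] by (intro mult_left_mono power_mono) auto
  also have "\<dots> = C ^ (n + 1) * (real q powr real (n + 2) * real q powr (real (n + 1) * (1 + \<epsilon>)))"
  proof -
    have "real q ^ (n + 2) = real q powr real (n + 2)"
      using \<open>q > 0\<close> by (rule powr_realpow[symmetric, OF of_nat_0_less_iff[THEN iffD2]])
    moreover have "(real q powr (1 + \<epsilon>)) ^ (n + 1) = real q powr (real (n + 1) * (1 + \<epsilon>))"
      using \<open>q > 0\<close> by (intro powr_power) simp
    ultimately show ?thesis by (simp only: power_mult_distrib mult_ac)
  qed
  also have "real (n + 2) + real (n + 1) * (1 + \<epsilon>) = 3 + 2 * real n + real (n + 1) * \<epsilon>"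
    by (simp add: field_simps)
  then have "real q powr real (n + 2) * real q powr (real (n + 1) * (1 + \<epsilon>))
      = real q powr (3 + 2 * real n + real (n + 1) * \<epsilon>)"
    by (simp only: powr_add[symmetric])
  finally show ?thesis .
qed

theorem mainTheorem4:
  fixes n :: nat and \<eta> :: real
  assumes "n \<ge> 2" and "\<eta> > 0"
  shows "\<exists>C. \<forall>(i0::nat) (j0::nat) (x::int) (y::int) (c::nat \<Rightarrow> int) (q::nat).
           i0 \<le> n \<longrightarrow> j0 \<le> n \<longrightarrow> q \<ge> 1 \<longrightarrow>
           (\<Sum>a\<in>PiE ({..n} - {i0}) (\<lambda>_. {0..<int q}).
              \<Sum>a'\<in>PiE ({..n} - {j0}) (\<lambda>_. {0..<int q}).
                 norm (S_q q n (a(i0 := x mod int q)) (a'(j0 := y mod int q)) c))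
           \<le> C * real q powr (3 + 2 * real n + \<eta>)"
proof -
  define \<epsilon> where "\<epsilon> = \<eta> / real (n + 1)"
  have "\<epsilon> > 0" using assms(2) by (simp add: \<epsilon>_def)
  then obtain C where divisors: "\<And>q. q > 0 \<Longrightarrow> real (card {d. d dvd q}) \<le> C * real q powr \<epsilon>"
    using divisor_count_bound by blast
  have "real (n + 1) * \<epsilon> = \<eta>" by (simp add: \<epsilon>_def)
  show ?thesis
  proof (intro exI[of _ "C ^ (n + 1)"] allI impI)
    fix i0 j0 :: nat and x y :: int and c :: "nat \<Rightarrow> int" and q :: nat
    assume "i0 \<le> n" "j0 \<le> n" "q \<ge> 1"
    then show "(\<Sum>a\<in>PiE ({..n} - {i0}) (\<lambda>_. {0..<int q}). \<Sum>a'\<in>PiE ({..n} - {j0}) (\<lambda>_. {0..<int q}).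
              norm (S_q q n (a(i0 := x mod int q)) (a'(j0 := y mod int q)) c))
          \<le> C ^ (n + 1) * real q powr (3 + 2 * real n + \<eta>)"
      using sum_norm_S_q_le_powr[OF divisors, of q i0 n j0 "x mod int q" "y mod int q" c]
      unfolding \<open>real (n + 1) * \<epsilon> = \<eta>\<close> by simp
  qed
qed

end
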